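(* Let $P$ and $Q$ be disjoint polytopes in $\mathbb{R}^d$ such that $P$ and $-Q$ are Minkowski equivalent. Then there is a hyperplane separating $P$ and $Q$ which is parallel to a facet of $P$.
   Context: Two polytopes are Minkowski equivalent if they have the same normal fan (the collection of normal cones of their faces). Here $-Q = \{-q : q \in Q\}$. A hyperplane $H$ separates $P$ and $Q$ if $P$ and $Q$ lie in the two opposite closed half-spaces determined by $H$ (here it can be taken to be strict separation: there is a normal vector $y$ and a real $c$ with $\max_{x\in P}\langle x,y\rangle < c < \min_{x\in Q}\langle x,y\rangle$); it is parallel to a facet of $P$ if its normal vector is normal to that facet. *)

theory Defs
  imports "HOL-Analysis.Analysis"
begin

definition normal_cone :: "'a::euclidean_space set \<Rightarrow> 'a set \<Rightarrow> 'a set" where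
  "normal_cone P F = {y. \<forall>x\<in>F. \<forall>z\<in>P. z \<bullet> y \<le> x \<bullet> y}"

definition normal_fan :: "'a::euclidean_space set \<Rightarrow> 'a set set" where
  "normal_fan P = {normal_cone P F | F. F face_of P \<and> F \<noteq> {}}"

definition minkowski_equivalent :: "'a::euclidean_space set \<Rightarrow> 'a set \<Rightarrow> bool" where
  "minkowski_equivalent P Q \<longleftrightarrow> normal_fan P = normal_fan Q"

text \<open>y is normal to a facet of P: the face of P exposed by y is a facet of P.
  For a 0-dimensional polytope (a point) the only facet is the empty face, whose
  normal cone is the whole space; this convention is encoded by the first disjunct.\<close>
definition facet_normal :: "'a::euclidean_space set \<Rightarrow> 'a \<Rightarrow> bool" where
  "facet_normal P y \<longleftrightarrow> aff_dim P = 0 \<or>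
     (\<exists>F. F facet_of P \<and> F = {x\<in>P. \<forall>z\<in>P. z \<bullet> y \<le> x \<bullet> y})"

end

theory Submission
  imports Defs
begin

text \<open>Write h(y) for the sum of the support functions of P and -Q at y; a direction y
  yields a separating hyperplane iff h(y) < 0, and disjointness provides one such y0.
  Since P and -Q have the same normal fan, their faces in any two directions are nested in
  the same way. Hence, if x0 lies in the relative interior of the face F of P exposed by y0
  and x' in the face of -Q exposed by y0, then h(z) is the linear functional of v = x0 + x'
  at every z whose face of P contains F, in particular at every normal of a facet through x0.
  Directions constant on P can be added to any facet normal without changing the facet,
  which puts v into the direction space of the affine hull of P. If h were nonnegative at all
  facet normals, a small step from x0 in direction -v would therefore stay in P, yet it
  increases the value of y0, which is maximal at x0.\<close>

definition max_face :: "'a::real_inner set \<Rightarrow> 'a \<Rightarrow> 'a set" where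
  "max_face S y = {x\<in>S. \<forall>z\<in>S. z \<bullet> y \<le> x \<bullet> y}"

definition support_function :: "'a::real_inner set \<Rightarrow> 'a \<Rightarrow> real" where
  "support_function S y = (SUP x\<in>S. x \<bullet> y)"

lemma max_face_subset: "max_face S y \<subseteq> S"
  by (auto simp: max_face_def)

lemma max_face_nonempty:
  fixes S :: "'a::real_inner set"
  assumes "compact S" "S \<noteq> {}"
  shows "max_face S y \<noteq> {}"
proof -
  have "continuous_on S (\<lambda>x. x \<bullet> y)"
    by (intro continuous_intros)
  then obtain x where "x \<in> S" "\<forall>z\<in>S. z \<bullet> y \<le> x \<bullet> y"
    using continuous_attains_sup[OF assms] by blast
  then show ?thesis
    by (auto simp: max_face_def)
qed

lemma max_face_eq_supporting_hyperplane:
  assumes "S \<subseteq> {x. a \<bullet> x \<le> b}" "S \<inter> {x. a \<bullet> x = b} \<noteq> {}"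
  shows "max_face S a = S \<inter> {x. a \<bullet> x = b}"
proof -
  obtain p where p: "p \<in> S" "a \<bullet> p = b"
    using assms(2) by blast
  have "x \<in> max_face S a \<longleftrightarrow> x \<in> S \<and> a \<bullet> x = b" for x
  proof
    assume "x \<in> max_face S a"
    then have "x \<in> S" "b \<le> a \<bullet> x"
      using p by (auto simp: max_face_def inner_commute)
    with assms(1) show "x \<in> S \<and> a \<bullet> x = b"
      by fastforce
  next
    assume "x \<in> S \<and> a \<bullet> x = b"
    with assms(1) show "x \<in> max_face S a"
      by (auto simp: max_face_def inner_commute)
  qed
  then show ?thesis
    by blast
qed

lemma face_of_max_face:
  fixes S :: "'a::euclidean_space set"
  assumes "convex S"
  shows "max_face S y face_of S"
proof (cases "max_face S y = {}")
  case False
  then obtain p where "p \<in> max_face S y"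
    by blast
  then have le: "\<And>x. x \<in> S \<Longrightarrow> y \<bullet> x \<le> y \<bullet> p"
    and eq: "max_face S y = S \<inter> {x. y \<bullet> x = y \<bullet> p}"
    by (auto simp: max_face_def inner_commute intro: order_antisym)
  show ?thesis
    unfolding eq using le by (rule face_of_Int_supporting_hyperplane_le[OF assms])
qed simp

lemma max_face_add_constant_direction:
  assumes "\<forall>p\<in>S. p \<bullet> l = k"
  shows "max_face S (t *\<^sub>R l + a) = max_face S a"
  using assms by (auto simp: max_face_def inner_add_right)

lemma polyhedron_facet_eq_max_face:
  fixes P :: "'a::euclidean_space set"
  assumes "polyhedron P" "F facet_of P"
  obtains a where "max_face P a = F"
proof -
  obtain a b where "P \<subseteq> {x. a \<bullet> x \<le> b}" "F = P \<inter> {x. a \<bullet> x = b}"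
    using facet_of_polyhedron[OF assms] by blast
  moreover have "F \<noteq> {}"
    using assms(2) by (simp add: facet_of_def)
  ultimately have "max_face P a = F"
    using max_face_eq_supporting_hyperplane[of P a b] by simp
  then show thesis ..
qed

lemma normal_cone_eq_max_face:
  assumes "F \<subseteq> S"
  shows "normal_cone S F = {y. F \<subseteq> max_face S y}"
  using assms by (auto simp: normal_cone_def max_face_def)

lemma normal_cone_max_face_in_normal_fan:
  fixes S :: "'a::euclidean_space set"
  assumes "compact S" "convex S" "S \<noteq> {}"
  shows "normal_cone S (max_face S y) \<in> normal_fan S"
  using max_face_nonempty[OF assms(1,3)] face_of_max_face[OF assms(2)]
  unfolding normal_fan_def by blast

text \<open>The normal cone of the face exposed by y is the smallest cone of the fan containing y,
  so it is determined by the fan alone.\<close>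
lemma normal_cone_max_face_eq_if_normal_fan_eq:
  fixes S T :: "'a::euclidean_space set"
  assumes "normal_fan S = normal_fan T"
    and "compact S" "convex S" "S \<noteq> {}" "compact T" "convex T" "T \<noteq> {}"
  shows "normal_cone S (max_face S y) = normal_cone T (max_face T y)"
proof -
  have smaller: "normal_cone T (max_face T y) \<subseteq> normal_cone S (max_face S y)"
    if fan: "normal_fan S = normal_fan T" and S: "compact S" "convex S" "S \<noteq> {}"
    for S T :: "'a set"
  proof -
    obtain G where G: "G face_of T" "normal_cone S (max_face S y) = normal_cone T G"
      using normal_cone_max_face_in_normal_fan[OF S] fan
      unfolding normal_fan_def by blast
    have "y \<in> normal_cone S (max_face S y)"
      by (simp add: normal_cone_eq_max_face max_face_subset)
    with G(2) have "y \<in> normal_cone T G"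
      by simp
    with G(1) have "G \<subseteq> max_face T y"
      by (simp add: normal_cone_eq_max_face face_of_imp_subset)
    with G show ?thesis
      by (auto simp: normal_cone_eq_max_face face_of_imp_subset max_face_subset)
  qed
  show ?thesis
    using smaller[of S T] smaller[of T S] assms by auto
qed

lemma max_face_subset_iff_if_normal_fan_eq:
  fixes S T :: "'a::euclidean_space set"
  assumes "normal_fan S = normal_fan T"
    and "compact S" "convex S" "S \<noteq> {}" "compact T" "convex T" "T \<noteq> {}"
  shows "max_face S y \<subseteq> max_face S z \<longleftrightarrow> max_face T y \<subseteq> max_face T z"
  using normal_cone_max_face_eq_if_normal_fan_eq[OF assms, of y] max_face_subset[of S] max_face_subset[of T]
  by (auto simp: normal_cone_eq_max_face set_eq_iff)

lemma support_function_eq: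
  assumes "p \<in> max_face S y"
  shows "support_function S y = p \<bullet> y"
  unfolding support_function_def
  using assms by (intro cSup_eq_maximum) (auto simp: max_face_def)

lemma inner_le_support_function:
  fixes S :: "'a::real_inner set"
  assumes "compact S" "x \<in> S"
  shows "x \<bullet> y \<le> support_function S y"
proof -
  obtain p where "p \<in> max_face S y"
    using max_face_nonempty[OF assms(1)] assms(2) by blast
  then show ?thesis
    using assms(2) by (simp add: support_function_eq max_face_def)
qed

lemma support_function_sublinear:
  fixes S :: "'a::real_inner set"
  assumes "compact S" "S \<noteq> {}" "0 \<le> t"
  shows "support_function S (t *\<^sub>R l + a) \<le> t * support_function S l + support_function S a"
proof -
  obtain p where p: "p \<in> max_face S (t *\<^sub>R l + a)"
    using max_face_nonempty[OF assms(1,2)] by blast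
  then have "p \<in> S"
    using max_face_subset by blast
  then have "t * (p \<bullet> l) + p \<bullet> a \<le> t * support_function S l + support_function S a"
    using assms by (intro add_mono mult_left_mono inner_le_support_function) auto
  then show ?thesis
    using support_function_eq[OF p] by (simp add: inner_add_right)
qed

lemma separating_hyperplane_iff_support_function:
  fixes P Q :: "'a::real_inner set"
  assumes "compact P" "P \<noteq> {}" "compact Q" "Q \<noteq> {}"
  shows "(\<exists>c. (\<forall>x\<in>P. x \<bullet> y < c) \<and> (\<forall>x\<in>Q. c < x \<bullet> y))
    \<longleftrightarrow> support_function P y + support_function (uminus ` Q) y < 0"
proof -
  have "compact (uminus ` Q)"
    using assms(3) by (intro compact_continuous_image continuous_intros)
  then obtain q where q: "q \<in> max_face (uminus ` Q) y"
    using max_face_nonempty assms(4) by blast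
  then have min_Q: "-q \<in> Q" "\<And>x. x \<in> Q \<Longrightarrow> -q \<bullet> y \<le> x \<bullet> y"
    by (auto simp: max_face_def)
  obtain p where p: "p \<in> max_face P y"
    using max_face_nonempty[OF assms(1,2)] by blast
  then have max_P: "p \<in> P" "\<And>x. x \<in> P \<Longrightarrow> x \<bullet> y \<le> p \<bullet> y"
    by (auto simp: max_face_def)
  show ?thesis
    unfolding support_function_eq[OF p] support_function_eq[OF q]
  proof
    assume "\<exists>c. (\<forall>x\<in>P. x \<bullet> y < c) \<and> (\<forall>x\<in>Q. c < x \<bullet> y)"
    then show "p \<bullet> y + q \<bullet> y < 0"
      using max_P(1) min_Q(1) by force
  next
    assume "p \<bullet> y + q \<bullet> y < 0"
    then have "(\<forall>x\<in>P. x \<bullet> y < (p \<bullet> y - q \<bullet> y) / 2) \<and> (\<forall>x\<in>Q. (p \<bullet> y - q \<bullet> y) / 2 < x \<bullet> y)"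
      using max_P(2) min_Q(2) by force
    then show "\<exists>c. (\<forall>x\<in>P. x \<bullet> y < c) \<and> (\<forall>x\<in>Q. c < x \<bullet> y)"
      by blast
  qed
qed

lemma support_function_sum_eq_if_max_face_subset:
  fixes P T :: "'a::euclidean_space set"
  assumes "normal_fan P = normal_fan T"
    and "compact P" "convex P" "P \<noteq> {}" "compact T" "convex T" "T \<noteq> {}"
    and "p \<in> max_face P y" "q \<in> max_face T y" "max_face P y \<subseteq> max_face P z"
  shows "support_function P z + support_function T z = (p + q) \<bullet> z"
proof -
  have "max_face T y \<subseteq> max_face T z"
    using max_face_subset_iff_if_normal_fan_eq[OF assms(1-7)] assms(10) by blast
  with assms(8-10) have "p \<in> max_face P z" "q \<in> max_face T z"
    by blast+
  then show ?thesis
    by (simp add: support_function_eq inner_add_left)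
qed

lemma mem_span_if_inner_nonneg_on_orthogonal:
  fixes v :: "'a::euclidean_space"
  assumes "\<And>l. (\<And>w. w \<in> S \<Longrightarrow> w \<bullet> l = 0) \<Longrightarrow> 0 \<le> v \<bullet> l"
  shows "v \<in> span S"
proof -
  obtain v1 v2 where v1: "v1 \<in> span S" and v2: "\<And>w. w \<in> span S \<Longrightarrow> orthogonal v2 w"
    and v: "v = v1 + v2"
    using orthogonal_subspace_decomp_exists by blast
  have "w \<bullet> (- v2) = 0" if "w \<in> S" for w
    using v2[OF span_base[OF that]] by (simp add: orthogonal_def inner_commute)
  then have "0 \<le> v \<bullet> (- v2)"
    by (rule assms)
  moreover have "v1 \<bullet> v2 = 0"
    using v2[OF v1] by (simp add: orthogonal_def inner_commute)
  ultimately have "v2 \<bullet> v2 \<le> 0"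
    by (simp add: v inner_add_left)
  then have "v2 = 0"
    by (metis inner_gt_zero_iff not_le)
  with v1 v show ?thesis
    by simp
qed

lemma add_mem_affine_hull_if_mem_span:
  fixes P :: "'a::euclidean_space set"
  assumes "x0 \<in> P" "d \<in> span ((\<lambda>p. - x0 + p) ` P)"
  shows "x0 + d \<in> affine hull P"
  unfolding affine_hull_span_gen[OF hull_inc[OF assms(1)]] using assms(2) by (rule imageI)

text \<open>The facet inequalities tight at x0 are those of the facets through x0; the slack
  ones survive a small step.\<close>
lemma polyhedron_feasible_direction:
  fixes P :: "'a::euclidean_space set"
  assumes "polyhedron P" "x0 \<in> P" "x0 + d \<in> affine hull P"
    and facets: "\<And>a. max_face P a facet_of P \<Longrightarrow> x0 \<in> max_face P a \<Longrightarrow> a \<bullet> d \<le> 0"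
  shows "\<exists>\<epsilon>>0. x0 + \<epsilon> *\<^sub>R d \<in> P"
proof -
  obtain Fs where Fs: "finite Fs" "P = affine hull P \<inter> \<Inter>Fs"
    and "\<forall>h\<in>Fs. \<exists>a b. a \<noteq> 0 \<and> h = {x. a \<bullet> x \<le> b}"
    and minimal: "\<And>F'. F' \<subset> Fs \<Longrightarrow> P \<subset> affine hull P \<inter> \<Inter>F'"
    using assms(1) by (simp add: polyhedron_Int_affine_minimal) meson
  then obtain a b where ab: "\<And>h. h \<in> Fs \<Longrightarrow> a h \<noteq> 0 \<and> h = {x. a h \<bullet> x \<le> b h}"
    by metis
  then have mem_h: "x \<in> h \<longleftrightarrow> a h \<bullet> x \<le> b h" if "h \<in> Fs" for h x
    using that by (metis mem_Collect_eq)
  define U where "U = (\<Inter>h\<in>{h\<in>Fs. a h \<bullet> x0 < b h}. {x. a h \<bullet> x < b h})"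
  have "((\<lambda>\<epsilon>. x0 + \<epsilon> *\<^sub>R d) \<longlongrightarrow> x0) (at_right 0)"
    by (intro tendsto_eq_intros) auto
  moreover have "open U"
    unfolding U_def using Fs(1) by (intro open_INT) (auto intro: open_halfspace_lt)
  ultimately have "\<forall>\<^sub>F \<epsilon> in at_right 0. x0 + \<epsilon> *\<^sub>R d \<in> U"
    by (rule topological_tendstoD) (simp add: U_def)
  then obtain \<epsilon> :: real where \<epsilon>: "\<epsilon> > 0" "x0 + \<epsilon> *\<^sub>R d \<in> U"
    using eventually_happens'[OF trivial_limit_at_right_real]
      eventually_conj[OF eventually_at_right_less] by blast
  have "x0 + \<epsilon> *\<^sub>R d \<in> h" if h: "h \<in> Fs" for h
  proof (cases "a h \<bullet> x0 < b h")
    case True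
    with \<epsilon>(2) h have "a h \<bullet> (x0 + \<epsilon> *\<^sub>R d) < b h"
      by (auto simp: U_def)
    then show ?thesis
      using mem_h[OF h] by simp
  next
    case False
    have P_le: "P \<subseteq> {x. a h \<bullet> x \<le> b h}"
      using Fs(2) h mem_h[OF h] by blast
    with False assms(2) have tight: "a h \<bullet> x0 = b h"
      by fastforce
    have "max_face P (a h) = P \<inter> {x. a h \<bullet> x = b h}"
      using P_le tight assms(2) by (intro max_face_eq_supporting_hyperplane) auto
    moreover have "P \<inter> {x. a h \<bullet> x = b h} facet_of P"
      using facet_of_polyhedron_explicit[OF Fs(1,2) ab minimal] h by blast
    ultimately have "a h \<bullet> d \<le> 0"
      using facets tight assms(2) by simp
    with \<epsilon>(1) tight show ?thesis
      by (simp add: mem_h[OF h] inner_add_right mult_nonneg_nonpos)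
  qed
  moreover have "x0 + \<epsilon> *\<^sub>R d \<in> affine hull P"
    using mem_affine[OF affine_affine_hull hull_inc[OF assms(2)] assms(3), of "1 - \<epsilon>" \<epsilon>]
    by (simp add: algebra_simps)
  ultimately show ?thesis
    using Fs(2) \<epsilon>(1) by blast
qed

lemma facet_with_negative_support_sum_if_constant_direction:
  fixes P T :: "'a::euclidean_space set"
  assumes "polytope P" "0 < aff_dim P" "compact T" "T \<noteq> {}"
    and "\<forall>p\<in>P. p \<bullet> l = k"
    and negative: "support_function P l + support_function T l < 0"
  shows "\<exists>z. max_face P z facet_of P \<and> support_function P z + support_function T z < 0"
proof -
  have P: "compact P" "P \<noteq> {}"
    using assms(1,2) polytope_imp_compact by auto
  obtain F where F: "F facet_of P"
    using polytope_facet_exists[OF assms(1,2)] by blast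
  obtain a where "max_face P a = F"
    using polyhedron_facet_eq_max_face[OF polytope_imp_polyhedron[OF assms(1)] F] .
  with F have a: "max_face P a facet_of P"
    by simp
  define h where "h y = support_function P y + support_function T y" for y
  define t where "t = (\<bar>h a\<bar> + 1) / - h l"
  have "h l < 0"
    using negative by (simp add: h_def)
  then have t: "0 < t" "t * h l = - (\<bar>h a\<bar> + 1)"
    unfolding t_def by (auto simp: divide_pos_neg)
  have "h (t *\<^sub>R l + a) \<le> t * h l + h a"
    unfolding h_def using support_function_sublinear[OF P, of t l a]
      support_function_sublinear[OF assms(3,4), of t l a] t(1)
    by (simp add: algebra_simps)
  also have "\<dots> < 0"
    using t(2) by linarith
  finally have "h (t *\<^sub>R l + a) < 0" .
  moreover have "max_face P (t *\<^sub>R l + a) facet_of P"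
    using a max_face_add_constant_direction[OF assms(5)] by simp
  ultimately show ?thesis
    unfolding h_def by blast
qed

lemma facet_with_negative_support_sum:
  fixes P T :: "'a::euclidean_space set"
  assumes "polytope P" "0 < aff_dim P" "compact T" "convex T" "T \<noteq> {}"
    and fan: "normal_fan P = normal_fan T"
    and negative: "support_function P y0 + support_function T y0 < 0"
  shows "\<exists>z. max_face P z facet_of P \<and> support_function P z + support_function T z < 0"
proof (rule ccontr)
  assume "\<not> ?thesis"
  then have nonneg: "0 \<le> support_function P z + support_function T z"
    if "max_face P z facet_of P" for z
    using that by force
  have P: "compact P" "convex P" "P \<noteq> {}"
    using assms(1,2) polytope_imp_compact polytope_imp_convex by auto
  define F where "F = max_face P y0"
  have "F face_of P" "F \<noteq> {}"
    unfolding F_def using face_of_max_face max_face_nonempty P by auto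
  then obtain x0 where x0: "x0 \<in> rel_interior F"
    using face_of_imp_convex rel_interior_eq_empty by blast
  then have x0F: "x0 \<in> F" and x0P: "x0 \<in> P"
    using rel_interior_subset max_face_subset F_def by blast+
  obtain x' where x': "x' \<in> max_face T y0"
    using max_face_nonempty assms(3,5) by blast
  define v where "v = x0 + x'"
  have linear: "support_function P z + support_function T z = v \<bullet> z" if "F \<subseteq> max_face P z" for z
    using support_function_sum_eq_if_max_face_subset[OF fan P assms(3-5)] x0F x' that
    by (simp add: F_def v_def)
  have "v \<bullet> y0 < 0"
    using linear[of y0] negative by (simp add: F_def)
  have "v \<in> span ((\<lambda>p. - x0 + p) ` P)"
  proof (rule mem_span_if_inner_nonneg_on_orthogonal)
    fix l
    assume orthogonal: "\<And>w. w \<in> (\<lambda>p. - x0 + p) ` P \<Longrightarrow> w \<bullet> l = 0"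
    have l_const: "\<forall>p\<in>P. p \<bullet> l = x0 \<bullet> l"
    proof
      fix p
      assume "p \<in> P"
      then have "(- x0 + p) \<bullet> l = 0"
        by (intro orthogonal imageI)
      then show "p \<bullet> l = x0 \<bullet> l"
        by (simp add: inner_diff_left)
    qed
    then have "F \<subseteq> max_face P l"
      using max_face_subset F_def by (auto simp: max_face_def)
    then show "0 \<le> v \<bullet> l"
      using facet_with_negative_support_sum_if_constant_direction[OF assms(1-3,5) l_const]
        nonneg linear by force
  qed
  then have "x0 + - v \<in> affine hull P"
    by (intro add_mem_affine_hull_if_mem_span x0P span_neg)
  moreover have "a \<bullet> - v \<le> 0" if "max_face P a facet_of P" "x0 \<in> max_face P a" for a
  proof -
    have "F \<subseteq> max_face P a"
      using subset_of_face_of[OF facet_of_imp_face_of[OF that(1)]] x0 that(2)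
        max_face_subset F_def by blast
    then show ?thesis
      using nonneg[OF that(1)] linear by (simp add: inner_commute)
  qed
  ultimately obtain \<epsilon> where "\<epsilon> > 0" "x0 + \<epsilon> *\<^sub>R - v \<in> P"
    using polyhedron_feasible_direction polytope_imp_polyhedron[OF assms(1)] x0P by metis
  then have "(x0 - \<epsilon> *\<^sub>R v) \<bullet> y0 \<le> x0 \<bullet> y0"
    using x0F by (auto simp: F_def max_face_def)
  then show False
    using mult_pos_neg[OF \<open>\<epsilon> > 0\<close> \<open>v \<bullet> y0 < 0\<close>] by (simp add: inner_diff_left)
qed

theorem lemma2p4:
  fixes P Q :: "'a::euclidean_space set"
  assumes "polytope P" and "polytope Q" and "P \<noteq> {}" and "Q \<noteq> {}"
    and "P \<inter> Q = {}"
    and "minkowski_equivalent P (uminus ` Q)"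
  shows "\<exists>y c. facet_normal P y \<and> (\<forall>x\<in>P. x \<bullet> y < c) \<and> (\<forall>x\<in>Q. c < x \<bullet> y)"
proof -
  have P: "compact P" "convex P" and Q: "compact Q" "convex Q"
    using assms(1,2) polytope_imp_compact polytope_imp_convex by auto
  have Q': "compact (uminus ` Q)" "convex (uminus ` Q)" "uminus ` Q \<noteq> {}"
    using polytope_linear_image[OF linear_uminus assms(2)] assms(4)
      polytope_imp_compact polytope_imp_convex by auto
  note separates_iff = separating_hyperplane_iff_support_function[OF P(1) assms(3) Q(1) assms(4)]
  obtain y0 c0 where "\<forall>x\<in>P. y0 \<bullet> x < c0" "\<forall>x\<in>Q. c0 < y0 \<bullet> x"
    using separating_hyperplane_compact_closed[OF P(2,1) assms(3) Q(2) compact_imp_closed[OF Q(1)] assms(5)]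
    by blast
  then have y0: "\<exists>c. (\<forall>x\<in>P. x \<bullet> y0 < c) \<and> (\<forall>x\<in>Q. c < x \<bullet> y0)"
    by (auto simp: inner_commute)
  show ?thesis
  proof (cases "aff_dim P = 0")
    case True
    with y0 show ?thesis
      by (auto simp: facet_normal_def)
  next
    case False
    then have "0 < aff_dim P"
      using assms(3) aff_dim_negative_iff[of P] by linarith
    with y0 obtain z where "max_face P z facet_of P" "support_function P z + support_function (uminus ` Q) z < 0"
      using facet_with_negative_support_sum[OF assms(1) _ Q'(1,2,3)] assms(6) separates_iff
      unfolding minkowski_equivalent_def by blast
    then show ?thesis
      using separates_iff by (auto simp: facet_normal_def max_face_def)
  qed
qed

end
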